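(* Let $B>4$ and $U\ge 1$ be integers, let $N_0\ge 0$ and $E_s>0$, and let $\mathbf{H}\in\mathbb{C}^{B\times U}$ have i.i.d.\ circularly symmetric complex Gaussian entries with zero mean and unit variance. Let $\mathbf{A}=\mathbf{H}^H\mathbf{H}+N_0E_s^{-1}\mathbf{I}_U$, let $\mathbf{D}$ be the diagonal matrix with the same diagonal as $\mathbf{A}$, and let $\mathbf{E}=\mathbf{A}-\mathbf{D}$. Then for every integer $K\ge 1$ and every $\alpha>0$, \[ \Pr\left\{\|\mathbf{D}^{-1}\mathbf{E}\|_F^K<\alpha\right\}\;\ge\;1-\frac{U^2-U}{\alpha^{2/K}}\sqrt{\frac{2B(B+1)}{(B-1)(B-2)(B-3)(B-4)}}. \]
   Context: $\|\cdot\|_F$ denotes the Frobenius norm and $\mathbf{H}^H$ the conjugate transpose. The diagonal entries of $\mathbf{A}$ are almost surely positive, so $\mathbf{D}$ is almost surely invertible. $\mathbf{E}$ is the "hollow" part of $\mathbf{A}$ (zero diagonal, off-diagonal entries equal to those of $\mathbf{A}$). *)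

theory Defs
  imports "HOL-Probability.Probability"
begin

text \<open>Matrices of size m x n are represented as functions nat => nat => complex,
  only the entries with row index < m and column index < n being relevant.\<close>

text \<open>Density of the circularly symmetric complex Gaussian CN(0,1) with respect to
  Lebesgue measure on the complex plane (identified with R^2).\<close>
definition cgauss_density :: "complex \<Rightarrow> ennreal" where
  "cgauss_density z = ennreal (exp (- (cmod z)\<^sup>2) / pi)"

definition reg_gram :: "nat \<Rightarrow> real \<Rightarrow> (nat \<Rightarrow> nat \<Rightarrow> complex) \<Rightarrow> nat \<Rightarrow> nat \<Rightarrow> complex" where
  "reg_gram B c H u v = (\<Sum>b<B. cnj (H b u) * H b v) + (if u = v then complex_of_real c else 0)"

definition diag_part :: "(nat \<Rightarrow> nat \<Rightarrow> complex) \<Rightarrow> nat \<Rightarrow> nat \<Rightarrow> complex" where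
  "diag_part A u v = (if u = v then A u u else 0)"

definition hollow_part :: "(nat \<Rightarrow> nat \<Rightarrow> complex) \<Rightarrow> nat \<Rightarrow> nat \<Rightarrow> complex" where
  "hollow_part A u v = A u v - diag_part A u v"

definition diag_inv :: "(nat \<Rightarrow> nat \<Rightarrow> complex) \<Rightarrow> nat \<Rightarrow> nat \<Rightarrow> complex" where
  "diag_inv D u v = (if u = v then inverse (D u u) else 0)"

definition sq_mult :: "nat \<Rightarrow> (nat \<Rightarrow> nat \<Rightarrow> complex) \<Rightarrow> (nat \<Rightarrow> nat \<Rightarrow> complex) \<Rightarrow> nat \<Rightarrow> nat \<Rightarrow> complex" where
  "sq_mult n X Y i j = (\<Sum>k<n. X i k * Y k j)"

definition frob_norm :: "nat \<Rightarrow> nat \<Rightarrow> (nat \<Rightarrow> nat \<Rightarrow> complex) \<Rightarrow> real" where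
  "frob_norm m n X = sqrt (\<Sum>i<m. \<Sum>j<n. (cmod (X i j))\<^sup>2)"

end

theory Submission
  imports Defs "HOL-Real_Asymp.Real_Asymp"
begin

text \<open>Let \<open>S = \<Sum>\<^sub>b conj(h\<^sub>b\<^sub>u) h\<^sub>b\<^sub>v\<close> and \<open>X = \<Sum>\<^sub>b |h\<^sub>b\<^sub>u|\<^sup>2\<close>, so that the
  \<open>(u,v)\<close> entry of \<open>D\<^sup>-\<^sup>1E\<close> has squared modulus \<open>|S|\<^sup>2/(X + N\<^sub>0/E\<^sub>s)\<^sup>2 \<le> |S|\<^sup>2/X\<^sup>2\<close>.
  Writing \<open>1/X\<^sup>2 = \<integral>\<^sub>0\<^sup>\<infinity> t e\<^sup>-\<^sup>t\<^sup>X dt\<close> and using Tonelli, it suffices to know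
  \<open>E[|S|\<^sup>2 e\<^sup>-\<^sup>t\<^sup>X] = B/(1+t)\<^sup>B\<^sup>+\<^sup>1\<close>, which follows by expanding \<open>|S|\<^sup>2\<close> into products
  of functions of single, independent entries and integrating each against the Gaussian density.
  Hence \<open>E[|S|\<^sup>2/X\<^sup>2] \<le> \<integral>\<^sub>0\<^sup>\<infinity> t B/(1+t)\<^sup>B\<^sup>+\<^sup>1 dt = 1/(B-1)\<close>, so
  \<open>E \<parallel>D\<^sup>-\<^sup>1E\<parallel>\<^sub>F\<^sup>2 \<le> (U\<^sup>2-U)/(B-1)\<close>, and Markov's inequality at level \<open>\<alpha>\<^sup>2\<^sup>/\<^sup>K\<close> gives
  the claim, since \<open>1/(B-1)\<close> is below the square-root factor of the stated bound.\<close>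

lemma nn_integral_gaussian_moments:
  assumes a: "(a::real) > 0"
  shows "(\<integral>\<^sup>+x. ennreal (exp (- a * x\<^sup>2)) \<partial>lborel) = ennreal (sqrt (pi / a))"
    and "(\<integral>\<^sup>+x. ennreal (x\<^sup>2 * exp (- a * x\<^sup>2)) \<partial>lborel) = ennreal (sqrt (pi / a) / (2 * a))"
proof -
  define \<sigma> where "\<sigma> = sqrt (1 / (2 * a))"
  have \<sigma>: "\<sigma> > 0" "\<sigma>\<^sup>2 = 1 / (2 * a)" using a by (simp_all add: \<sigma>_def)
  have eq: "exp (- a * x\<^sup>2) = sqrt (pi / a) * normal_density 0 \<sigma> x" for x
    unfolding normal_density_def \<sigma>(2) using a by (simp add: field_simps real_sqrt_divide)
  have "has_bochner_integral lborel (\<lambda>x. normal_density 0 \<sigma> x * (x - 0) ^ (2 * 0)) (fact (2 * 0) / ((2 / \<sigma>\<^sup>2)^0 * fact 0))"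
    by (rule normal_moment_even[OF \<sigma>(1)])
  then have n0: "(\<integral>\<^sup>+x. ennreal (normal_density 0 \<sigma> x) \<partial>lborel) = ennreal 1"
    by (subst nn_integral_eq_integral) (auto simp: has_bochner_integral_iff)
  have "has_bochner_integral lborel (\<lambda>x. normal_density 0 \<sigma> x * (x - 0) ^ (2 * 1)) (fact (2 * 1) / ((2 / \<sigma>\<^sup>2)^1 * fact 1))"
    by (rule normal_moment_even[OF \<sigma>(1)])
  then have n2: "(\<integral>\<^sup>+x. ennreal (normal_density 0 \<sigma> x * x\<^sup>2) \<partial>lborel) = ennreal (\<sigma>\<^sup>2)"
    by (subst nn_integral_eq_integral) (auto simp: has_bochner_integral_iff)
  have "(\<integral>\<^sup>+x. ennreal (exp (- a * x\<^sup>2)) \<partial>lborel) = (\<integral>\<^sup>+x. ennreal (sqrt (pi / a)) * ennreal (normal_density 0 \<sigma> x) \<partial>lborel)"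
    unfolding eq using a by (intro nn_integral_cong) (simp add: ennreal_mult)
  also have "\<dots> = ennreal (sqrt (pi / a))"
    by (subst nn_integral_cmult) (auto simp: n0)
  finally show "(\<integral>\<^sup>+x. ennreal (exp (- a * x\<^sup>2)) \<partial>lborel) = ennreal (sqrt (pi / a))" .
  have "(\<integral>\<^sup>+x. ennreal (x\<^sup>2 * exp (- a * x\<^sup>2)) \<partial>lborel) = (\<integral>\<^sup>+x. ennreal (sqrt (pi / a)) * ennreal (normal_density 0 \<sigma> x * x\<^sup>2) \<partial>lborel)"
    unfolding eq using a by (intro nn_integral_cong) (simp add: ennreal_mult[symmetric] mult_ac)
  also have "\<dots> = ennreal (sqrt (pi / a)) * ennreal (\<sigma>\<^sup>2)"
    by (subst nn_integral_cmult) (auto simp: n2)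
  also have "\<dots> = ennreal (sqrt (pi / a) / (2 * a))"
    using a by (simp add: \<sigma>(2) ennreal_mult[symmetric])
  finally show "(\<integral>\<^sup>+x. ennreal (x\<^sup>2 * exp (- a * x\<^sup>2)) \<partial>lborel) = ennreal (sqrt (pi / a) / (2 * a))" .
qed

lemma prod_Basis_complex: "(\<Prod>b\<in>(Basis::complex set). f b) = f 1 * f \<i>"
  by (simp add: Basis_complex_def)

text \<open>The complex integrals factor over the real and imaginary parts (\<open>nn_integral_lborel_prod\<close>);
  the second moment splits as \<open>|z|\<^sup>2 = (Re z)\<^sup>2 + (Im z)\<^sup>2\<close> into two such products.\<close>

lemma nn_integral_cgauss_exp:
  assumes s: "(s::real) \<ge> 0"
  shows "(\<integral>\<^sup>+z. cgauss_density z * ennreal (exp (- (s * (cmod z)\<^sup>2))) \<partial>lborel) = ennreal (1 / (1 + s))"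
proof -
  define a where "a = 1 + s"
  have a: "a > 0" using s by (simp add: a_def)
  define f where "f = (\<lambda>(b::complex) x::real. ennreal (exp (- a * x\<^sup>2) / sqrt pi))"
  have pf: "cgauss_density z * ennreal (exp (- (s * (cmod z)\<^sup>2))) = (\<Prod>b\<in>Basis. f b (z \<bullet> b))" for z
    unfolding prod_Basis_complex f_def cgauss_density_def
    by (simp add: ennreal_mult[symmetric] inner_complex_def cmod_power2 a_def mult_exp_exp
          field_simps del: ennreal_mult_eq_top_iff)
  have "(\<integral>\<^sup>+z. cgauss_density z * ennreal (exp (- (s * (cmod z)\<^sup>2))) \<partial>lborel)
      = (\<Prod>b\<in>Basis. (\<integral>\<^sup>+x. f b x \<partial>lborel))"
    unfolding pf by (rule nn_integral_lborel_prod) (auto simp: f_def)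
  also have "\<dots> = ennreal (sqrt (pi/a) / sqrt pi) * ennreal (sqrt (pi/a) / sqrt pi)"
    unfolding prod_Basis_complex f_def using nn_integral_gaussian_moments(1)[OF a] a
    by (simp add: divide_ennreal[symmetric] nn_integral_divide)
  also have "\<dots> = ennreal (1 / (1 + s))"
    using a by (simp add: ennreal_mult[symmetric] real_sqrt_divide a_def field_simps)
  finally show ?thesis .
qed

lemma nn_integral_cgauss_sq_exp:
  assumes s: "(s::real) \<ge> 0"
  shows "(\<integral>\<^sup>+z. cgauss_density z * ennreal ((cmod z)\<^sup>2 * exp (- (s * (cmod z)\<^sup>2))) \<partial>lborel)
           = ennreal (1 / (1 + s)^2)"
proof -
  define a where "a = 1 + s"
  have a: "a > 0" using s by (simp add: a_def)
  define g where "g = (\<lambda>(b::complex) x::real. ennreal ((if b = 1 then x\<^sup>2 else 1) * exp (- a * x\<^sup>2) / sqrt pi))"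
  define h where "h = (\<lambda>(b::complex) x::real. ennreal ((if b = \<i> then x\<^sup>2 else 1) * exp (- a * x\<^sup>2) / sqrt pi))"
  have pg: "cgauss_density z * ennreal ((cmod z)\<^sup>2 * exp (- (s * (cmod z)\<^sup>2)))
      = (\<Prod>b\<in>Basis. g b (z \<bullet> b)) + (\<Prod>b\<in>Basis. h b (z \<bullet> b))" for z
    unfolding prod_Basis_complex g_def h_def cgauss_density_def
    by (simp add: ennreal_mult[symmetric] ennreal_plus[symmetric] inner_complex_def cmod_power2 a_def mult_exp_exp
          field_simps del: ennreal_mult_eq_top_iff ennreal_plus)
  have "(\<integral>\<^sup>+z. cgauss_density z * ennreal ((cmod z)\<^sup>2 * exp (- (s * (cmod z)\<^sup>2))) \<partial>lborel)
     = (\<integral>\<^sup>+z. (\<Prod>b\<in>Basis. g b (z \<bullet> b)) \<partial>lborel) + (\<integral>\<^sup>+z. (\<Prod>b\<in>Basis. h b (z \<bullet> b)) \<partial>lborel)"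
    unfolding pg by (rule nn_integral_add) (auto simp: g_def h_def)
  also have "\<dots> = (\<Prod>b\<in>Basis. (\<integral>\<^sup>+x. g b x \<partial>lborel)) + (\<Prod>b\<in>Basis. (\<integral>\<^sup>+x. h b x \<partial>lborel))"
    by (subst nn_integral_lborel_prod, (auto simp: g_def h_def)[2])+ (rule refl)
  also have "\<dots> = ennreal (sqrt (pi/a) / (2*a) / sqrt pi) * ennreal (sqrt (pi/a) / sqrt pi)
      + ennreal (sqrt (pi/a) / sqrt pi) * ennreal (sqrt (pi/a) / (2*a) / sqrt pi)"
    unfolding prod_Basis_complex g_def h_def using nn_integral_gaussian_moments[OF a] a
    by (simp add: divide_ennreal[symmetric] nn_integral_divide) (simp add: divide_ennreal)
  also have "\<dots> = ennreal (1 / (1 + s)^2)"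
  proof -
    have "sqrt (pi/a) / (2*a) / sqrt pi * (sqrt (pi/a) / sqrt pi)
        + sqrt (pi/a) / sqrt pi * (sqrt (pi/a) / (2*a) / sqrt pi) = 1 / (a * a)"
      using a by (simp add: real_sqrt_divide field_simps)
    then show ?thesis using a
      by (simp add: ennreal_mult[symmetric] ennreal_plus[symmetric] a_def power2_eq_square del: ennreal_plus)
  qed
  finally show ?thesis .
qed

abbreviation cgauss :: "complex measure" where
  "cgauss \<equiv> density lborel cgauss_density"

lemma nn_integral_cgauss:
  assumes [measurable]: "f \<in> borel_measurable borel"
  shows "(\<integral>\<^sup>+z. f z \<partial>cgauss) = (\<integral>\<^sup>+z. cgauss_density z * f z \<partial>lborel)"
  unfolding cgauss_density_def by (subst nn_integral_density) auto

lemma has_bochner_integral_cgauss_exp: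
  assumes "(s::real) \<ge> 0"
  shows "has_bochner_integral cgauss (\<lambda>z. exp (- (s * (cmod z)\<^sup>2))) (1 / (1 + s))"
  by (rule has_bochner_integral_nn_integral) (use assms in \<open>auto simp: nn_integral_cgauss nn_integral_cgauss_exp\<close>)

lemma has_bochner_integral_cgauss_sq_exp:
  assumes "(s::real) \<ge> 0"
  shows "has_bochner_integral cgauss (\<lambda>z. (cmod z)\<^sup>2 * exp (- (s * (cmod z)\<^sup>2))) (1 / (1 + s)^2)"
  by (rule has_bochner_integral_nn_integral) (use assms in \<open>auto simp: nn_integral_cgauss nn_integral_cgauss_sq_exp\<close>)

lemma integrable_cgauss_quadratic_growth:
  assumes [measurable]: "f \<in> borel_measurable borel"
    and bound: "\<And>z. norm (f z :: complex) \<le> 1 + (cmod z)\<^sup>2"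
  shows "integrable cgauss f"
proof (rule Bochner_Integration.integrable_bound)
  show "integrable cgauss (\<lambda>z. 1 + (cmod z)\<^sup>2)"
    using has_bochner_integral_cgauss_exp[of 0] has_bochner_integral_cgauss_sq_exp[of 0]
    by (auto simp: has_bochner_integral_iff)
qed (auto intro: order.trans[OF bound])

lemma integral_cgauss_one: "(\<integral>z. (1::complex) \<partial>cgauss) = 1"
proof -
  have "(\<integral>z. (1::real) \<partial>cgauss) = 1"
    using has_bochner_integral_cgauss_exp[of 0] by (simp add: has_bochner_integral_iff)
  then show ?thesis
    by (simp del: integral_complex_of_real add: integral_complex_of_real[symmetric])
qed

lemma integral_cgauss_ident: "(\<integral>z. z \<partial>cgauss) = 0"
proof -
  define g where "g z = exp (- (cmod z)\<^sup>2) / pi" for z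
  have dens: "cgauss_density = (\<lambda>z. ennreal (g z))"
    by (simp add: fun_eq_iff cgauss_density_def g_def)
  have [measurable]: "g \<in> borel_measurable borel" unfolding g_def by measurable
  have "lborel = distr lborel borel (uminus :: complex \<Rightarrow> complex)"
    using lborel_affine[of "-1" "0::complex"] by (simp add: density_1)
  then have "(\<integral>z. g z *\<^sub>R z \<partial>lborel) = (\<integral>z. g z *\<^sub>R z \<partial>distr lborel borel uminus)"
    by simp
  also have "\<dots> = - (\<integral>z. g z *\<^sub>R z \<partial>lborel)"
    by (subst integral_distr) (auto simp: g_def)
  finally have "(\<integral>z. g z *\<^sub>R z \<partial>lborel) = (0::complex)" by simp
  then show ?thesis unfolding dens by (subst integral_density) (auto simp: g_def)
qed

lemma nn_integral_t_exp_neg_mult: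
  assumes X: "(X::real) > 0"
  shows "(\<integral>\<^sup>+t. ennreal (t * exp (- (t * X))) * indicator {0..} t \<partial>lborel) = ennreal (1 / X\<^sup>2)"
proof -
  have "(\<integral>\<^sup>+t. ennreal (t * exp (- (t * X))) * indicator {0..} t \<partial>lborel)
      = ennreal (0 - (- (1 + 0 * X) * exp (- (0 * X)) / X\<^sup>2))"
  proof (rule nn_integral_FTC_atLeast)
    show "((\<lambda>t. - (1 + t * X) * exp (- (t * X)) / X\<^sup>2) \<longlongrightarrow> 0) at_top"
      using X by real_asymp
    show "((\<lambda>t. - (1 + t * X) * exp (- (t * X)) / X\<^sup>2) has_real_derivative t * exp (- (t * X))) (at t)" for t
      using X by (auto intro!: derivative_eq_intros simp: field_simps power2_eq_square)
  qed auto
  then show ?thesis by simp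
qed

lemma has_real_derivative_laplace_antiderivative:
  assumes B: "B \<ge> (2::nat)" and t: "(t::real) > -1"
  shows "((\<lambda>t. - (1 + real B * t) / ((real B - 1) * (1 + t) ^ B))
           has_real_derivative t * (real B / (1 + t) ^ (B + 1))) (at t)"
proof -
  obtain n where n: "B = Suc n" "n \<ge> 1" using B by (cases B) auto
  define r where "r = (1 + t) ^ n"
  have nz: "real n \<noteq> 0" "1 + t \<noteq> 0" "r \<noteq> 0" using t n(2) by (auto simp: r_def)
  have pw: "(1 + t) ^ B = (1 + t) * r" "(1 + t) ^ (B - 1) = r" "(1 + t) ^ (B + 1) = (1 + t) * ((1 + t) * r)"
    by (simp_all add: r_def n(1))
  have Bn: "real B - 1 = real n" by (simp add: n(1))
  have "((\<lambda>t. - (1 + real B * t) / ((real B - 1) * (1 + t) ^ B)) has_real_derivative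
      (- real B * ((real B - 1) * (1 + t) ^ B) - (- (1 + real B * t)) * ((real B - 1) * (real B * (1 * (1 + t) ^ (B - 1)))))
        / (((real B - 1) * (1 + t) ^ B) * ((real B - 1) * (1 + t) ^ B))) (at t)"
    using B t by (intro DERIV_divide DERIV_cmult DERIV_minus) (auto intro!: derivative_eq_intros)
  moreover have "(- real B * ((real B - 1) * (1 + t) ^ B) - (- (1 + real B * t)) * ((real B - 1) * (real B * (1 * (1 + t) ^ (B - 1)))))
        / (((real B - 1) * (1 + t) ^ B) * ((real B - 1) * (1 + t) ^ B)) = t * (real B / (1 + t) ^ (B + 1))"
  proof -
    have num: "- real B * (real n * ((1 + t) * r)) - - (1 + real B * t) * (real n * (real B * (1 * r)))
        = (real n * r) * (real n * (real B * t))"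
      by (simp add: n(1) algebra_simps)
    have den: "real n * ((1 + t) * r) * (real n * ((1 + t) * r))
        = (real n * r) * (real n * ((1 + t) * ((1 + t) * r)))"
      by (simp add: algebra_simps)
    show ?thesis
      unfolding pw Bn num den using nz by simp
  qed
  ultimately show ?thesis by simp
qed

lemma nn_integral_t_mult_inverse_power:
  assumes B: "B \<ge> (2::nat)"
  shows "(\<integral>\<^sup>+t. ennreal (t * (real B / (1 + t) ^ (B + 1))) * indicator {0..} t \<partial>lborel)
           = ennreal (1 / (real B - 1))"
proof -
  have "(\<integral>\<^sup>+t. ennreal (t * (real B / (1 + t) ^ (B + 1))) * indicator {0..} t \<partial>lborel)
      = ennreal (0 - (- (1 + real B * 0) / ((real B - 1) * (1 + 0) ^ B)))"
  proof (rule nn_integral_FTC_atLeast)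
    obtain m where "B = Suc (Suc m)" using B by (metis add_2_eq_Suc le_Suc_ex)
    then show "((\<lambda>t::real. - (1 + real B * t) / ((real B - 1) * (1 + t) ^ B)) \<longlongrightarrow> 0) at_top"
      by simp real_asymp
    show "((\<lambda>t. - (1 + real B * t) / ((real B - 1) * (1 + t) ^ B))
        has_real_derivative t * (real B / (1 + t) ^ (B + 1))) (at t)" if "0 \<le> t" for t
      using B that by (intro has_real_derivative_laplace_antiderivative) auto
  qed auto
  then show ?thesis by simp
qed

lemma borel_measurable_cnj[measurable]: "cnj \<in> borel_measurable borel"
  by (intro borel_measurable_continuous_onI continuous_intros)

lemma cnj_mult_self: "cnj z * z = complex_of_real ((cmod z)\<^sup>2)"
  by (simp only: complex_norm_square mult.commute)

definition col_inner :: "nat \<Rightarrow> (nat \<Rightarrow> nat \<Rightarrow> complex) \<Rightarrow> nat \<Rightarrow> nat \<Rightarrow> complex" where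
  "col_inner B h u v = (\<Sum>b<B. cnj (h b u) * h b v)"

definition col_energy :: "nat \<Rightarrow> (nat \<Rightarrow> nat \<Rightarrow> complex) \<Rightarrow> nat \<Rightarrow> real" where
  "col_energy B h u = (\<Sum>b<B. (cmod (h b u))\<^sup>2)"

text \<open>For \<open>A = h\<^sup>Hh + c I\<close>, \<open>offdiag_ratio B c h u v\<close> is \<open>|(D\<^sup>-\<^sup>1E)\<^sub>u\<^sub>v|\<^sup>2\<close> and
  \<open>hollow_ratio_sqnorm B U c h\<close> is \<open>\<parallel>D\<^sup>-\<^sup>1E\<parallel>\<^sub>F\<^sup>2\<close> (see \<open>frob_norm_diag_inv_hollow\<close>).\<close>

definition offdiag_ratio :: "nat \<Rightarrow> real \<Rightarrow> (nat \<Rightarrow> nat \<Rightarrow> complex) \<Rightarrow> nat \<Rightarrow> nat \<Rightarrow> real" where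
  "offdiag_ratio B c h u v = (cmod (col_inner B h u v))\<^sup>2 / (col_energy B h u + c)\<^sup>2"

definition hollow_ratio_sqnorm :: "nat \<Rightarrow> nat \<Rightarrow> real \<Rightarrow> (nat \<Rightarrow> nat \<Rightarrow> complex) \<Rightarrow> real" where
  "hollow_ratio_sqnorm B U c h = (\<Sum>u<U. \<Sum>v\<in>{..<U} - {u}. offdiag_ratio B c h u v)"

lemma col_energy_nonneg: "0 \<le> col_energy B h u"
  by (simp add: col_energy_def sum_nonneg)

lemma offdiag_ratio_nonneg: "0 \<le> offdiag_ratio B c h u v"
  by (simp add: offdiag_ratio_def)

lemma hollow_ratio_sqnorm_nonneg: "0 \<le> hollow_ratio_sqnorm B U c h"
  by (simp add: hollow_ratio_sqnorm_def offdiag_ratio_nonneg sum_nonneg)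

lemma reg_gram_diag: "reg_gram B c h u u = complex_of_real (col_energy B h u + c)"
proof -
  have "(\<Sum>b<B. cnj (h b u) * h b u) = (\<Sum>b<B. complex_of_real ((cmod (h b u))\<^sup>2))"
    by (intro sum.cong refl) (simp only: cnj_mult_self)
  then show ?thesis by (simp add: reg_gram_def col_energy_def)
qed

lemma hollow_part_reg_gram: "hollow_part (reg_gram B c h) u v = (if u = v then 0 else col_inner B h u v)"
  by (simp add: hollow_part_def diag_part_def reg_gram_def col_inner_def)

lemma sq_mult_diag_inv_apply:
  assumes "u < n"
  shows "sq_mult n (diag_inv (diag_part A)) Y u v = inverse (A u u) * Y u v"
proof -
  have "(\<Sum>k<n. diag_inv (diag_part A) u k * Y k v) = (\<Sum>k<n. if k = u then inverse (A u u) * Y u v else 0)"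
    by (intro sum.cong) (auto simp: diag_inv_def diag_part_def)
  then show ?thesis using assms by (simp add: sq_mult_def)
qed

lemma frob_norm_diag_inv_hollow:
  assumes c: "c \<ge> 0"
  shows "frob_norm U U (sq_mult U (diag_inv (diag_part (reg_gram B c h))) (hollow_part (reg_gram B c h)))
           = sqrt (hollow_ratio_sqnorm B U c h)"
proof -
  let ?N = "sq_mult U (diag_inv (diag_part (reg_gram B c h))) (hollow_part (reg_gram B c h))"
  have entry: "(cmod (?N u v))\<^sup>2 = (if u = v then 0 else offdiag_ratio B c h u v)" if "u < U" for u v
  proof -
    have "cmod (reg_gram B c h u u) = col_energy B h u + c"
      unfolding reg_gram_diag norm_of_real using c col_energy_nonneg[of B h u] by simp
    then show ?thesis
      using that by (simp add: sq_mult_diag_inv_apply hollow_part_reg_gram offdiag_ratio_def norm_mult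
          norm_inverse power_mult_distrib power_inverse divide_inverse mult.commute)
  qed
  have row: "(\<Sum>v<U. (cmod (?N u v))\<^sup>2) = (\<Sum>v\<in>{..<U} - {u}. offdiag_ratio B c h u v)" if "u < U" for u
  proof -
    have "(\<Sum>v<U. (cmod (?N u v))\<^sup>2) = (\<Sum>v<U. if u = v then 0 else offdiag_ratio B c h u v)"
      using entry[OF that] by simp
    also have "\<dots> = (\<Sum>v\<in>{..<U} - {u}. offdiag_ratio B c h u v)"
      by (rule sum.mono_neutral_cong_right) auto
    finally show ?thesis .
  qed
  show ?thesis
    unfolding frob_norm_def hollow_ratio_sqnorm_def by (simp add: row)
qed

text \<open>Factor contributed by the entry \<open>i = (k, w)\<close> to the expansion of
  \<open>conj(h\<^sub>b\<^sub>u) h\<^sub>b\<^sub>v h\<^sub>b\<^sub>'\<^sub>u conj(h\<^sub>b\<^sub>'\<^sub>v) e\<^sup>-\<^sup>t\<^sup>X\<close> as a product over the entries of the columns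
  \<open>u\<close> and \<open>v\<close> (see \<open>prod_moment_factor\<close>).\<close>

definition moment_factor :: "real \<Rightarrow> nat \<Rightarrow> nat \<Rightarrow> nat \<Rightarrow> nat \<times> nat \<Rightarrow> complex \<Rightarrow> complex" where
  "moment_factor t u b b' i z = (if snd i = u
     then (if fst i = b then cnj z else 1) * (if fst i = b' then z else 1) * complex_of_real (exp (- (t * (cmod z)\<^sup>2)))
     else (if fst i = b then z else 1) * (if fst i = b' then cnj z else 1))"

lemma moment_factor_measurable[measurable]: "moment_factor t u b b' i \<in> borel_measurable borel"
  unfolding moment_factor_def by (cases "snd i = u"; cases "fst i = b"; cases "fst i = b'") simp_all

lemma norm_moment_factor_le:
  assumes t: "t \<ge> 0"
  shows "norm (moment_factor t u b b' i z) \<le> 1 + (cmod z)\<^sup>2"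
proof -
  have le: "norm (x * y) \<le> 1 + (cmod z)\<^sup>2"
    if "norm x \<le> max 1 (cmod z)" "norm y \<le> max 1 (cmod z)" for x y :: complex
  proof -
    have "norm (x * y) \<le> max 1 (cmod z) * max 1 (cmod z)"
      unfolding norm_mult using that by (intro mult_mono) auto
    also have "\<dots> \<le> 1 + (cmod z)\<^sup>2" by (auto simp: max_def power2_eq_square)
    finally show ?thesis .
  qed
  have z: "norm (if P then z else 1) \<le> max 1 (cmod z)" "norm (if P then cnj z else 1) \<le> max 1 (cmod z)"
    for P by auto
  show ?thesis
  proof (cases "snd i = u")
    case True
    have "norm (moment_factor t u b b' i z)
        = norm ((if fst i = b then cnj z else 1) * (if fst i = b' then z else 1))
          * norm (complex_of_real (exp (- (t * (cmod z)\<^sup>2))))"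
      using True by (simp add: moment_factor_def norm_mult del: norm_of_real)
    also have "\<dots> \<le> norm ((if fst i = b then cnj z else 1) * (if fst i = b' then z else 1))"
      using t by (intro mult_left_le) auto
    also have "\<dots> \<le> 1 + (cmod z)\<^sup>2" by (rule le[OF z(2) z(1)])
    finally show ?thesis .
  next
    case False
    then show ?thesis using le[OF z(1) z(2)] by (simp add: moment_factor_def)
  qed
qed

lemma integral_moment_factor_diag:
  assumes t: "t \<ge> 0"
  shows "(\<integral>z. moment_factor t u b b (b, u) z \<partial>cgauss) = complex_of_real (1 / (1 + t)^2)"
proof -
  have "moment_factor t u b b (b, u) z = complex_of_real ((cmod z)\<^sup>2 * exp (- (t * (cmod z)\<^sup>2)))" for z
  proof -
    have "moment_factor t u b b (b, u) z = (cnj z * z) * complex_of_real (exp (- (t * (cmod z)\<^sup>2)))"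
      by (simp add: moment_factor_def)
    then show ?thesis by (simp only: cnj_mult_self of_real_mult)
  qed
  moreover have "(\<integral>z. (cmod z)\<^sup>2 * exp (- (t * (cmod z)\<^sup>2)) \<partial>cgauss) = 1 / (1 + t)^2"
    using has_bochner_integral_cgauss_sq_exp[OF t] by (simp add: has_bochner_integral_iff)
  ultimately show ?thesis by (simp only: integral_complex_of_real fun_eq_iff[symmetric])
qed

lemma integral_moment_factor_col_u:
  assumes t: "t \<ge> 0" and "k \<noteq> b" "k \<noteq> b'"
  shows "(\<integral>z. moment_factor t u b b' (k, u) z \<partial>cgauss) = complex_of_real (1 / (1 + t))"
proof -
  have "moment_factor t u b b' (k, u) = (\<lambda>z. complex_of_real (exp (- (t * (cmod z)\<^sup>2))))"
    using assms by (auto simp: moment_factor_def fun_eq_iff)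
  then show ?thesis
    using has_bochner_integral_cgauss_exp[OF t] by (simp add: has_bochner_integral_iff)
qed

lemma integral_moment_factor_col_v:
  assumes "v \<noteq> u"
  shows "(\<integral>z. moment_factor t u b b (b, v) z \<partial>cgauss) = 1"
    and "k \<noteq> b \<Longrightarrow> k \<noteq> b' \<Longrightarrow> (\<integral>z. moment_factor t u b b' (k, v) z \<partial>cgauss) = 1"
    and "b \<noteq> b' \<Longrightarrow> (\<integral>z. moment_factor t u b b' (b, v) z \<partial>cgauss) = 0"
proof -
  have "moment_factor t u b b (b, v) z = complex_of_real ((cmod z)\<^sup>2 * exp (- (0 * (cmod z)\<^sup>2)))" for z
  proof -
    have "moment_factor t u b b (b, v) z = cnj z * z"
      using assms by (simp add: moment_factor_def mult.commute)
    then show ?thesis by (simp only: cnj_mult_self) simp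
  qed
  moreover have "(\<integral>z. (cmod z)\<^sup>2 * exp (- (0 * (cmod z)\<^sup>2)) \<partial>cgauss) = 1"
    using has_bochner_integral_cgauss_sq_exp[of 0] by (simp add: has_bochner_integral_iff)
  ultimately show "(\<integral>z. moment_factor t u b b (b, v) z \<partial>cgauss) = 1"
    by (simp only: integral_complex_of_real of_real_1 fun_eq_iff[symmetric])
  show "(\<integral>z. moment_factor t u b b' (k, v) z \<partial>cgauss) = 1" if "k \<noteq> b" "k \<noteq> b'"
    using assms that integral_cgauss_one by (simp add: moment_factor_def)
  show "(\<integral>z. moment_factor t u b b' (b, v) z \<partial>cgauss) = 0" if "b \<noteq> b'"
    using assms that integral_cgauss_ident by (simp add: moment_factor_def)
qed

lemma prod_times_doubleton:
  assumes "u \<noteq> v"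
  shows "(\<Prod>i\<in>A \<times> {u, v}. f i) = (\<Prod>k\<in>A. f (k, u) * f (k, v))"
proof -
  have "(\<Prod>i\<in>A \<times> {u, v}. f i) = (\<Prod>k\<in>A. \<Prod>w\<in>{u, v}. f (k, w))"
    unfolding prod.cartesian_product by (simp add: split_def)
  then show ?thesis using assms by simp
qed

lemma prod_if_eq_single:
  assumes "b < (B::nat)"
  shows "(\<Prod>k<B. if k = b then x else y) = x * y ^ (B - 1)"
proof -
  have "(\<Prod>k<B. if k = b then x else y) = x * (\<Prod>k\<in>{..<B} - {b}. if k = b then x else y)"
    using assms by (subst prod.remove[of _ b]) auto
  also have "(\<Prod>k\<in>{..<B} - {b}. if k = b then x else y) = y ^ (B - 1)"
    using assms by (subst prod.cong[OF refl, of _ _ "\<lambda>_. y"]) auto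
  finally show ?thesis .
qed

lemma prod_moment_factor:
  assumes uv: "u \<noteq> v" and b: "b < B" "b' < B"
  shows "(\<Prod>i\<in>{..<B} \<times> {u, v}. moment_factor t u b b' i (h (fst i) (snd i)))
    = cnj (h b u) * h b v * (h b' u * cnj (h b' v)) * complex_of_real (exp (- (t * col_energy B h u)))"
proof -
  have exp_sum: "(\<Prod>k<B. complex_of_real (exp (- (t * (cmod (h k u))\<^sup>2))))
      = complex_of_real (exp (- (t * col_energy B h u)))"
    by (simp add: col_energy_def of_real_prod[symmetric] exp_sum[symmetric] sum_distrib_left sum_negf)
  have "(\<Prod>i\<in>{..<B} \<times> {u, v}. moment_factor t u b b' i (h (fst i) (snd i)))
     = (\<Prod>k<B. (if k = b then cnj (h k u) else 1) * (if k = b' then h k u else 1)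
                * complex_of_real (exp (- (t * (cmod (h k u))\<^sup>2)))
                * ((if k = b then h k v else 1) * (if k = b' then cnj (h k v) else 1)))"
    using uv by (simp add: prod_times_doubleton moment_factor_def cong: if_cong)
  also have "\<dots> = cnj (h b u) * h b v * (h b' u * cnj (h b' v)) * complex_of_real (exp (- (t * col_energy B h u)))"
    using b by (simp only: prod.distrib exp_sum[symmetric]) simp
  finally show ?thesis .
qed

lemma col_inner_sq_exp_expansion:
  assumes "u \<noteq> v"
  shows "complex_of_real ((cmod (col_inner B h u v))\<^sup>2 * exp (- (t * col_energy B h u)))
    = (\<Sum>b<B. \<Sum>b'<B. \<Prod>i\<in>{..<B} \<times> {u, v}. moment_factor t u b b' i (h (fst i) (snd i)))"
proof -
  let ?e = "complex_of_real (exp (- (t * col_energy B h u)))"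
  have "complex_of_real ((cmod (col_inner B h u v))\<^sup>2 * exp (- (t * col_energy B h u)))
      = (col_inner B h u v * cnj (col_inner B h u v)) * ?e"
    by (simp only: of_real_mult complex_norm_square)
  also have "col_inner B h u v * cnj (col_inner B h u v)
      = (\<Sum>b<B. \<Sum>b'<B. cnj (h b u) * h b v * (h b' u * cnj (h b' v)))"
    by (simp add: col_inner_def sum_product)
  finally show ?thesis
    using assms by (simp add: prod_moment_factor sum_distrib_right)
qed

text \<open>Only the terms \<open>b = b'\<close> survive: otherwise the factor of entry \<open>(b, v)\<close> is \<open>h\<^sub>b\<^sub>v\<close>,
  which has mean zero.\<close>

lemma prod_integral_moment_factor:
  assumes uv: "u \<noteq> v" and t: "t \<ge> 0" and b: "b < B" "b' < B"
  shows "(\<Prod>i\<in>{..<B} \<times> {u, v}. \<integral>z. moment_factor t u b b' i z \<partial>cgauss)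
           = (if b = b' then complex_of_real (1 / (1 + t) ^ (B + 1)) else 0)"
proof (cases "b = b'")
  case True
  have "(\<Prod>i\<in>{..<B} \<times> {u, v}. \<integral>z. moment_factor t u b b i z \<partial>cgauss)
      = (\<Prod>k<B. if k = b then complex_of_real (1 / (1 + t)^2) else complex_of_real (1 / (1 + t)))"
    using uv t by (auto simp: prod_times_doubleton integral_moment_factor_diag integral_moment_factor_col_u
        integral_moment_factor_col_v intro!: prod.cong)
  also have "\<dots> = complex_of_real (1 / (1 + t)^2 * (1 / (1 + t)) ^ (B - 1))"
    using b by (simp add: prod_if_eq_single)
  also have "(1 / (1 + t)^2 * (1 / (1 + t)) ^ (B - 1)) = 1 / (1 + t) ^ (B + 1)"
    using b by (simp add: power_add[symmetric] power_one_over)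
  finally show ?thesis using True by simp
next
  case False
  have "(\<Prod>i\<in>{..<B} \<times> {u, v}. \<integral>z. moment_factor t u b b' i z \<partial>cgauss) = 0"
  proof (rule prod_zero)
    show "\<exists>i\<in>{..<B} \<times> {u, v}. (\<integral>z. moment_factor t u b b' i z \<partial>cgauss) = 0"
      using uv b False by (intro bexI[of _ "(b, v)"]) (auto simp: integral_moment_factor_col_v(3))
  qed simp
  then show ?thesis using False by simp
qed

lemma offdiag_ratio_le_laplace:
  assumes c: "c \<ge> 0"
  shows "ennreal (offdiag_ratio B c h u v)
    \<le> (\<integral>\<^sup>+t. ennreal ((cmod (col_inner B h u v))\<^sup>2 * (t * exp (- (t * col_energy B h u)))) * indicator {0..} t \<partial>lborel)"
    (is "_ \<le> ?L")
proof (cases "col_energy B h u = 0")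
  case True
  then have "\<forall>b\<in>{..<B}. (cmod (h b u))\<^sup>2 = 0"
    unfolding col_energy_def by (subst sum_nonneg_eq_0_iff[symmetric]) auto
  then have "col_inner B h u v = 0" by (simp add: col_inner_def)
  then show ?thesis by (simp add: offdiag_ratio_def)
next
  case False
  define X where "X = col_energy B h u"
  have X: "X > 0" using False col_energy_nonneg[of B h u] by (simp add: X_def)
  have "?L = ennreal ((cmod (col_inner B h u v))\<^sup>2) * (\<integral>\<^sup>+t. ennreal (t * exp (- (t * X))) * indicator {0..} t \<partial>lborel)"
    unfolding X_def[symmetric]
    by (subst nn_integral_cmult[symmetric]) (auto simp: ennreal_mult' mult.assoc)
  also have "\<dots> = ennreal ((cmod (col_inner B h u v))\<^sup>2 / X\<^sup>2)"
    using X by (simp add: nn_integral_t_exp_neg_mult ennreal_mult'[symmetric])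
  finally have L: "?L = ennreal ((cmod (col_inner B h u v))\<^sup>2 / X\<^sup>2)" .
  have "X\<^sup>2 \<le> (X + c)\<^sup>2" using X c by (intro power_mono) auto
  then have "(cmod (col_inner B h u v))\<^sup>2 / (X + c)\<^sup>2 \<le> (cmod (col_inner B h u v))\<^sup>2 / X\<^sup>2"
    using X c by (intro divide_left_mono) (auto intro!: mult_pos_pos)
  then show ?thesis unfolding offdiag_ratio_def L unfolding X_def[symmetric] by (rule ennreal_leI)
qed

lemma integrable_integral_le_of_nn_integral_le:
  fixes f :: "'a \<Rightarrow> real"
  assumes [measurable]: "f \<in> borel_measurable M" and nonneg: "\<And>x. 0 \<le> f x"
    and le: "(\<integral>\<^sup>+x. ennreal (f x) \<partial>M) \<le> ennreal r" and r: "0 \<le> r"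
  shows "integrable M f" and "(\<integral>x. f x \<partial>M) \<le> r"
proof -
  show int: "integrable M f"
  proof (rule integrableI_bounded)
    show "(\<integral>\<^sup>+x. ennreal (norm (f x)) \<partial>M) < \<infinity>"
      using le nonneg by (simp add: le_less_trans)
  qed simp
  have "ennreal (\<integral>x. f x \<partial>M) \<le> ennreal r"
    using le int nonneg by (subst nn_integral_eq_integral[symmetric]) auto
  then show "(\<integral>x. f x \<partial>M) \<le> r"
    using r by (simp add: ennreal_le_iff)
qed

locale cgauss_matrix = prob_space M
  for M :: "'a measure" and H :: "'a \<Rightarrow> nat \<Rightarrow> nat \<Rightarrow> complex" and B U :: nat +
  assumes indep_entries: "indep_vars (\<lambda>_. borel) (\<lambda>(b, u) \<omega>. H \<omega> b u) ({..<B} \<times> {..<U})"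
    and distributed_entries: "\<And>b u. b < B \<Longrightarrow> u < U \<Longrightarrow> distributed M lborel (\<lambda>\<omega>. H \<omega> b u) cgauss_density"
begin

lemma entry_measurable: "b < B \<Longrightarrow> u < U \<Longrightarrow> (\<lambda>\<omega>. H \<omega> b u) \<in> borel_measurable M"
  using distributed_measurable[OF distributed_entries] by simp

lemma col_inner_measurable:
  "u < U \<Longrightarrow> v < U \<Longrightarrow> (\<lambda>\<omega>. col_inner B (H \<omega>) u v) \<in> borel_measurable M"
  unfolding col_inner_def
  by (intro borel_measurable_sum borel_measurable_times measurable_compose[OF _ borel_measurable_cnj])
    (auto intro: entry_measurable)

lemma col_energy_measurable: "u < U \<Longrightarrow> (\<lambda>\<omega>. col_energy B (H \<omega>) u) \<in> borel_measurable M"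
  unfolding col_energy_def
  by (intro borel_measurable_sum borel_measurable_power measurable_compose[OF _ borel_measurable_norm])
    (auto intro: entry_measurable)

lemma offdiag_ratio_measurable:
  assumes "u < U" "v < U"
  shows "(\<lambda>\<omega>. offdiag_ratio B c (H \<omega>) u v) \<in> borel_measurable M"
proof -
  note [measurable] = col_inner_measurable[OF assms] col_energy_measurable[OF assms(1)]
  show ?thesis unfolding offdiag_ratio_def by measurable
qed

lemma hollow_ratio_sqnorm_measurable: "(\<lambda>\<omega>. hollow_ratio_sqnorm B U c (H \<omega>)) \<in> borel_measurable M"
  unfolding hollow_ratio_sqnorm_def
  by (intro borel_measurable_sum offdiag_ratio_measurable) auto

lemma entry_integral:
  assumes "b < B" "u < U" and [measurable]: "f \<in> borel_measurable borel"
  shows "integrable M (\<lambda>\<omega>. f (H \<omega> b u)) \<longleftrightarrow> integrable cgauss f"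
    and "(\<integral>\<omega>. f (H \<omega> b u) \<partial>M) = (\<integral>z. (f z :: complex) \<partial>cgauss)"
proof -
  have m: "(\<lambda>\<omega>. H \<omega> b u) \<in> measurable M lborel"
    using entry_measurable[OF assms(1,2)] by simp
  have d: "distr M lborel (\<lambda>\<omega>. H \<omega> b u) = cgauss"
    using distributed_distr_eq_density[OF distributed_entries[OF assms(1,2)]] by simp
  show "integrable M (\<lambda>\<omega>. f (H \<omega> b u)) \<longleftrightarrow> integrable cgauss f"
    using integrable_distr_eq[OF m, of f] d by simp
  show "(\<integral>\<omega>. f (H \<omega> b u) \<partial>M) = (\<integral>z. f z \<partial>cgauss)"
    using integral_distr[OF m, of f] d by simp
qed

lemma integral_prod_moment_factor:
  assumes uv: "u \<noteq> v" "u < U" "v < U" and t: "t \<ge> 0"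
  defines "J \<equiv> {..<B} \<times> {u, v}"
  shows "integrable M (\<lambda>\<omega>. \<Prod>i\<in>J. moment_factor t u b b' i (H \<omega> (fst i) (snd i)))"
    and "(\<integral>\<omega>. (\<Prod>i\<in>J. moment_factor t u b b' i (H \<omega> (fst i) (snd i))) \<partial>M)
          = (\<Prod>i\<in>J. \<integral>z. moment_factor t u b b' i z \<partial>cgauss)"
proof -
  have JU: "J \<subseteq> {..<B} \<times> {..<U}" using uv by (auto simp: J_def)
  have "indep_vars (\<lambda>_. borel) (\<lambda>i \<omega>. moment_factor t u b b' i ((\<lambda>(b, u) \<omega>. H \<omega> b u) i \<omega>)) J"
    by (rule indep_vars_compose2[OF indep_vars_subset[OF indep_entries JU]]) simp
  then have ind: "indep_vars (\<lambda>_. borel) (\<lambda>i \<omega>. moment_factor t u b b' i (H \<omega> (fst i) (snd i))) J"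
    by (simp add: split_def)
  have int: "integrable M (\<lambda>\<omega>. moment_factor t u b b' i (H \<omega> (fst i) (snd i)))" if "i \<in> J" for i
    using that JU entry_integral(1)[of "fst i" "snd i" "moment_factor t u b b' i"]
      integrable_cgauss_quadratic_growth[OF moment_factor_measurable norm_moment_factor_le[OF t]]
    by auto
  show "integrable M (\<lambda>\<omega>. \<Prod>i\<in>J. moment_factor t u b b' i (H \<omega> (fst i) (snd i)))"
    by (rule indep_vars_integrable[OF _ ind int]) (simp add: J_def)
  have "(\<integral>\<omega>. (\<Prod>i\<in>J. moment_factor t u b b' i (H \<omega> (fst i) (snd i))) \<partial>M)
      = (\<Prod>i\<in>J. \<integral>\<omega>. moment_factor t u b b' i (H \<omega> (fst i) (snd i)) \<partial>M)"
    by (rule indep_vars_lebesgue_integral[OF _ ind int]) (simp add: J_def)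
  also have "\<dots> = (\<Prod>i\<in>J. \<integral>z. moment_factor t u b b' i z \<partial>cgauss)"
    using JU by (intro prod.cong refl entry_integral(2)) auto
  finally show "(\<integral>\<omega>. (\<Prod>i\<in>J. moment_factor t u b b' i (H \<omega> (fst i) (snd i))) \<partial>M)
      = (\<Prod>i\<in>J. \<integral>z. moment_factor t u b b' i z \<partial>cgauss)" .
qed

lemma has_bochner_integral_col_inner_sq_exp:
  assumes uv: "u \<noteq> v" "u < U" "v < U" and t: "t \<ge> 0"
  shows "has_bochner_integral M (\<lambda>\<omega>. (cmod (col_inner B (H \<omega>) u v))\<^sup>2 * exp (- (t * col_energy B (H \<omega>) u)))
           (real B / (1 + t) ^ (B + 1))"
proof -
  define f where "f \<omega> = (cmod (col_inner B (H \<omega>) u v))\<^sup>2 * exp (- (t * col_energy B (H \<omega>) u))" for \<omega>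
  define T where "T b b' \<omega> = (\<Prod>i\<in>{..<B} \<times> {u, v}. moment_factor t u b b' i (H \<omega> (fst i) (snd i)))" for b b' \<omega>
  have fT: "(\<lambda>\<omega>. complex_of_real (f \<omega>)) = (\<lambda>\<omega>. \<Sum>b<B. \<Sum>b'<B. T b b' \<omega>)"
    unfolding f_def T_def by (simp only: col_inner_sq_exp_expansion[OF uv(1)])
  have intT: "integrable M (T b b')" for b b'
    using integral_prod_moment_factor(1)[OF uv t] by (simp add: T_def[abs_def])
  have intf: "integrable M (\<lambda>\<omega>. complex_of_real (f \<omega>))"
    unfolding fT using intT by auto
  have "(\<integral>\<omega>. complex_of_real (f \<omega>) \<partial>M) = (\<Sum>b<B. \<Sum>b'<B. \<integral>\<omega>. T b b' \<omega> \<partial>M)"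
    unfolding fT using intT by (simp add: Bochner_Integration.integral_sum Bochner_Integration.integrable_sum)
  also have "\<dots> = (\<Sum>b<B. \<Sum>b'<B. if b = b' then complex_of_real (1 / (1 + t) ^ (B + 1)) else 0)"
    using integral_prod_moment_factor(2)[OF uv t] prod_integral_moment_factor[OF uv(1) t]
    by (intro sum.cong refl) (simp add: T_def)
  also have "\<dots> = complex_of_real (real B / (1 + t) ^ (B + 1))"
    by simp
  finally have "complex_of_real (\<integral>\<omega>. f \<omega> \<partial>M) = complex_of_real (real B / (1 + t) ^ (B + 1))"
    by simp
  then have "(\<integral>\<omega>. f \<omega> \<partial>M) = real B / (1 + t) ^ (B + 1)"
    using of_real_eq_iff by blast
  moreover have "integrable M f"
    using integrable_bounded_linear[OF bounded_linear_Re intf] by simp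
  ultimately show ?thesis
    unfolding f_def by (simp add: has_bochner_integral_iff)
qed

lemma nn_integral_offdiag_ratio_le:
  assumes uv: "u \<noteq> v" "u < U" "v < U" and c: "c \<ge> 0" and B: "B \<ge> 2"
  shows "(\<integral>\<^sup>+\<omega>. ennreal (offdiag_ratio B c (H \<omega>) u v) \<partial>M) \<le> ennreal (1 / (real B - 1))"
proof -
  define g where
    "g \<omega> t = ennreal ((cmod (col_inner B (H \<omega>) u v))\<^sup>2 * (t * exp (- (t * col_energy B (H \<omega>) u)))) * indicator {0..} t"
    for \<omega> t
  note [measurable] = col_inner_measurable[OF uv(2,3)] col_energy_measurable[OF uv(2)]
  interpret pair_sigma_finite M lborel ..
  have [measurable]: "case_prod g \<in> borel_measurable (M \<Otimes>\<^sub>M lborel)"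
    unfolding g_def by measurable
  have E: "(\<integral>\<^sup>+\<omega>. g \<omega> t \<partial>M) = ennreal (t * (real B / (1 + t) ^ (B + 1))) * indicator {0..} t" for t
  proof (cases "t \<ge> 0")
    case True
    have "has_bochner_integral M
        (\<lambda>\<omega>. t * ((cmod (col_inner B (H \<omega>) u v))\<^sup>2 * exp (- (t * col_energy B (H \<omega>) u))))
        (t * (real B / (1 + t) ^ (B + 1)))"
      using has_bochner_integral_col_inner_sq_exp[OF uv True] by (rule has_bochner_integral_mult_right)
    then show ?thesis
      using True by (simp add: g_def mult_ac nn_integral_eq_integral has_bochner_integral_iff)
  qed (simp add: g_def)
  have "(\<integral>\<^sup>+\<omega>. ennreal (offdiag_ratio B c (H \<omega>) u v) \<partial>M) \<le> (\<integral>\<^sup>+\<omega>. \<integral>\<^sup>+t. g \<omega> t \<partial>lborel \<partial>M)"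
    unfolding g_def using c by (intro nn_integral_mono offdiag_ratio_le_laplace)
  also have "\<dots> = (\<integral>\<^sup>+t. \<integral>\<^sup>+\<omega>. g \<omega> t \<partial>M \<partial>lborel)"
    by (rule Fubini'[symmetric]) measurable
  also have "\<dots> = ennreal (1 / (real B - 1))"
    unfolding E by (rule nn_integral_t_mult_inverse_power[OF B])
  finally show ?thesis .
qed

lemma prob_hollow_ratio_sqnorm_ge:
  assumes c: "c \<ge> 0" and B: "B \<ge> 2" and a: "a > 0"
  shows "measure M {\<omega> \<in> space M. a \<le> hollow_ratio_sqnorm B U c (H \<omega>)}
           \<le> (real U ^ 2 - real U) / (real B - 1) / a"
proof -
  let ?F = "\<lambda>\<omega>. hollow_ratio_sqnorm B U c (H \<omega>)"
  have meas: "(\<lambda>\<omega>. ennreal (offdiag_ratio B c (H \<omega>) u v)) \<in> borel_measurable M" if "u < U" "v < U" for u v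
    using measurable_compose[OF offdiag_ratio_measurable[OF that] measurable_ennreal] .
  have "(\<integral>\<^sup>+\<omega>. ennreal (?F \<omega>) \<partial>M)
      = (\<integral>\<^sup>+\<omega>. (\<Sum>u<U. \<Sum>v\<in>{..<U} - {u}. ennreal (offdiag_ratio B c (H \<omega>) u v)) \<partial>M)"
    unfolding hollow_ratio_sqnorm_def by (simp add: offdiag_ratio_nonneg sum_nonneg)
  also have "\<dots> = (\<Sum>u<U. \<Sum>v\<in>{..<U} - {u}. \<integral>\<^sup>+\<omega>. ennreal (offdiag_ratio B c (H \<omega>) u v) \<partial>M)"
    using meas by (subst nn_integral_sum) (auto intro!: sum.cong nn_integral_sum borel_measurable_sum)
  also have "\<dots> \<le> (\<Sum>u<U. \<Sum>v\<in>{..<U} - {u}. ennreal (1 / (real B - 1)))"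
    using c B by (intro sum_mono nn_integral_offdiag_ratio_le) auto
  also have "\<dots> = ennreal ((real U ^ 2 - real U) / (real B - 1))"
    using B by (cases U) (simp_all add: ennreal_of_nat_eq_real_of_nat ennreal_mult'[symmetric] power2_eq_square algebra_simps add_divide_distrib ennreal_plus)
  finally have le: "(\<integral>\<^sup>+\<omega>. ennreal (?F \<omega>) \<partial>M) \<le> ennreal ((real U ^ 2 - real U) / (real B - 1))" .
  have bound: "0 \<le> (real U ^ 2 - real U) / (real B - 1)"
    using B by (cases U) (auto simp: power2_eq_square)
  note int = integrable_integral_le_of_nn_integral_le[OF hollow_ratio_sqnorm_measurable hollow_ratio_sqnorm_nonneg le bound]
  have "measure M {\<omega> \<in> space M. a \<le> ?F \<omega>} \<le> (\<integral>\<omega>. ?F \<omega> \<partial>M) / a"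
    by (rule integral_Markov_inequality_measure[OF int(1) _ _ a]) (auto simp: hollow_ratio_sqnorm_nonneg)
  also have "\<dots> \<le> (real U ^ 2 - real U) / (real B - 1) / a"
    using int(2) a by (intro divide_right_mono) auto
  finally show ?thesis .
qed

end

lemma sqrt_power_less_iff:
  assumes y: "(y::real) \<ge> 0" and K: "K \<ge> (1::nat)" and \<alpha>: "\<alpha> > 0"
  shows "sqrt y ^ K < \<alpha> \<longleftrightarrow> y < \<alpha> powr (2 / real K)"
proof (cases "y = 0")
  case True
  then show ?thesis using \<alpha> K by (simp add: power_0_left)
next
  case False
  then have yp: "y > 0" using y by simp
  have Kp: "real K > 0" using K by simp
  have e: "sqrt y ^ K = y powr (real K / 2)"
    using yp by (simp add: sqrt_def root_powr_inverse powr_realpow[symmetric] powr_powr)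
  show ?thesis
  proof
    assume "sqrt y ^ K < \<alpha>"
    then have "(y powr (real K / 2)) powr (2 / real K) < \<alpha> powr (2 / real K)"
      using yp Kp by (intro powr_less_mono2) (auto simp: e)
    then show "y < \<alpha> powr (2 / real K)" using Kp by (simp add: powr_powr)
  next
    assume "y < \<alpha> powr (2 / real K)"
    then have "y powr (real K / 2) < (\<alpha> powr (2 / real K)) powr (real K / 2)"
      using yp Kp by (intro powr_less_mono2) auto
    then show "sqrt y ^ K < \<alpha>" using Kp \<alpha> by (simp add: e powr_powr)
  qed
qed

lemma frob_norm_power_less_iff:
  assumes "c \<ge> 0" "K \<ge> 1" "\<alpha> > 0"
  shows "frob_norm U U (sq_mult U (diag_inv (diag_part (reg_gram B c h))) (hollow_part (reg_gram B c h))) ^ K < \<alpha>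
           \<longleftrightarrow> hollow_ratio_sqnorm B U c h < \<alpha> powr (2 / real K)"
  using assms by (simp add: frob_norm_diag_inv_hollow sqrt_power_less_iff hollow_ratio_sqnorm_nonneg)

lemma inverse_pred_le_sqrt_bound:
  assumes "B > (4::nat)"
  shows "1 / (real B - 1) \<le> sqrt (2 * real B * (real B + 1) / ((real B - 1) * (real B - 2) * (real B - 3) * (real B - 4)))"
proof (rule real_le_rsqrt)
  define b where "b = real B"
  have b: "b > 4" using assms by (simp add: b_def)
  define Q where "Q = (b - 2) * (b - 3) * (b - 4)"
  define N where "N = 2 * b * (b + 1)"
  have Q: "Q > 0" using b by (simp add: Q_def)
  have "N * (b - 1) - Q = b^3 + 9 * b^2 - 28 * b + 24"
    by (simp add: N_def Q_def algebra_simps power2_eq_square power3_eq_cube)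
  moreover have "28 * b \<le> 9 * b^2" using b by (simp add: power2_eq_square)
  ultimately have "Q \<le> N * (b - 1)" using b by (smt (verit) zero_less_power)
  then have "1 / (b - 1) \<le> N / Q" using Q b by (simp add: divide_simps mult.commute)
  then have "(1 / (b - 1)) / (b - 1) \<le> (N / Q) / (b - 1)"
    using b by (intro divide_right_mono) auto
  then have "(1 / (b - 1))\<^sup>2 \<le> N / ((b - 1) * Q)"
    by (simp add: power2_eq_square mult.commute)
  then show "(1 / (real B - 1))\<^sup>2 \<le> 2 * real B * (real B + 1) / ((real B - 1) * (real B - 2) * (real B - 3) * (real B - 4))"
    by (simp add: b_def N_def Q_def mult.assoc)
qed

theorem theorem1:
  fixes M :: "'a measure"
    and H :: "'a \<Rightarrow> nat \<Rightarrow> nat \<Rightarrow> complex"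
    and B U K :: nat
    and N0 Es \<alpha> :: real
  assumes "prob_space M"
    and "B > 4" and "U \<ge> 1"
    and "N0 \<ge> 0" and "Es > 0"
    and "K \<ge> 1" and "\<alpha> > 0"
    and "prob_space.indep_vars M (\<lambda>_. borel) (\<lambda>(b, u) \<omega>. H \<omega> b u) ({..<B} \<times> {..<U})"
    and "\<And>b u. b < B \<Longrightarrow> u < U \<Longrightarrow> distributed M lborel (\<lambda>\<omega>. H \<omega> b u) cgauss_density"
  shows "measure M {\<omega> \<in> space M.
            (frob_norm U U (sq_mult U (diag_inv (diag_part (reg_gram B (N0 / Es) (H \<omega>))))
                                      (hollow_part (reg_gram B (N0 / Es) (H \<omega>))))) ^ K < \<alpha>}
         \<ge> 1 - (real U ^ 2 - real U) / (\<alpha> powr (2 / real K))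
               * sqrt (2 * real B * (real B + 1)
                       / ((real B - 1) * (real B - 2) * (real B - 3) * (real B - 4)))"
proof -
  interpret cgauss_matrix M H B U
    using assms(1,8,9) by (simp add: cgauss_matrix_def cgauss_matrix_axioms_def)
  define c where "c = N0 / Es"
  define a where "a = \<alpha> powr (2 / real K)"
  have c: "c \<ge> 0" and a: "a > 0" using assms(4,5,7) by (auto simp: c_def a_def)
  let ?F = "\<lambda>\<omega>. hollow_ratio_sqnorm B U c (H \<omega>)"
  let ?E = "{\<omega> \<in> space M. (frob_norm U U (sq_mult U (diag_inv (diag_part (reg_gram B c (H \<omega>))))
                                      (hollow_part (reg_gram B c (H \<omega>))))) ^ K < \<alpha>}"
  have small: "?E = space M - {\<omega> \<in> space M. a \<le> ?F \<omega>}"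
    using assms(6,7) by (auto simp: frob_norm_power_less_iff[OF c] a_def not_le)
  have large: "{\<omega> \<in> space M. a \<le> ?F \<omega>} \<in> events"
    using hollow_ratio_sqnorm_measurable by measurable
  have "0 \<le> (real U ^ 2 - real U) / a"
    using assms(3) a by (simp add: power2_eq_square)
  from mult_left_mono[OF inverse_pred_le_sqrt_bound[OF assms(2)] this]
  have "1 - (real U ^ 2 - real U) / a * sqrt (2 * real B * (real B + 1)
                       / ((real B - 1) * (real B - 2) * (real B - 3) * (real B - 4)))
      \<le> 1 - (real U ^ 2 - real U) / (real B - 1) / a"
    by (simp add: field_simps)
  also have "\<dots> \<le> 1 - measure M {\<omega> \<in> space M. a \<le> ?F \<omega>}"
    using prob_hollow_ratio_sqnorm_ge[OF c _ a] assms(2) by simp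
  also have "\<dots> = measure M ?E"
    unfolding small by (rule prob_compl[OF large, symmetric])
  finally show ?thesis
    unfolding c_def a_def .
qed

end
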